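(* Let $K\ge 1$, let $u_1,\dots,u_K\in\mathbb{R}$, and write $u_k^+=\max\{u_k,0\}$, $u_k^-=\max\{-u_k,0\}$, $S_+=\sum_{k=1}^K u_k^+$, $S_-=\sum_{k=1}^K u_k^-$ and $s=\sum_{k=1}^K u_k$. Fix $\eta>0$, $\sigma_z^2>0$ and $\mu_1,\dots,\mu_K>0$. Let $h_{k,+},h_{k,-}$ ($k=1,\dots,K$) be independent with $h_{k,\pm}\sim\mathcal{CN}(0,\mu_k^2)$ (so $\mu_k^2=\mathbb{E}|h_{k,\pm}|^2$), let $z_+,z_-\sim\mathcal{CN}(0,\sigma_z^2)$ be independent, and let $\phi_{k,\pm}\sim\mathrm{Unif}[0,2\pi)$ be independent across clients and branches; all of these random variables are mutually independent. Define the transmitted symbols $$a_{k,+}=\frac{\sqrt{\eta u_k^+}}{\mu_k}e^{\mathrm{i}\phi_{k,+}},\qquad a_{k,-}=\frac{\sqrt{\eta u_k^-}}{\mu_k}e^{\mathrm{i}\phi_{k,-}},$$ the received signals $y_\pm=\sum_{k=1}^K h_{k,\pm}a_{k,\pm}+z_\pm$, and the estimator $\hat s=\frac{|y_+|^2-|y_-|^2}{\eta}$. Then $\mathbb{E}[\hat s]=s$ and $$\mathrm{Var}(\hat s)=S_+^2+S_-^2+\frac{2\sigma_z^2}{\eta}\sum_{k=1}^K|u_k|+\frac{2\sigma_z^4}{\eta^2}.$$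
   Context: $\mathcal{CN}(0,\nu)$ denotes the circularly symmetric complex Gaussian distribution with variance $\nu$; $\mathrm{i}$ is the imaginary unit. *)

theory Defs
  imports "HOL-Probability.Probability"
begin

definition CN_density :: "real \<Rightarrow> complex \<Rightarrow> real" where
  "CN_density \<nu> z = exp (- (cmod z)\<^sup>2 / \<nu>) / (pi * \<nu>)"

definition circ_gauss :: "'a measure \<Rightarrow> real \<Rightarrow> ('a \<Rightarrow> complex) \<Rightarrow> bool" where
  "circ_gauss M \<nu> X \<longleftrightarrow> distributed M lborel X (\<lambda>z. ennreal (CN_density \<nu> z))"

definition unif_phase :: "'a measure \<Rightarrow> ('a \<Rightarrow> real) \<Rightarrow> bool" where
  "unif_phase M X \<longleftrightarrow>
     distributed M lborel X (\<lambda>x. ennreal (indicator {0..<2*pi} x / (2*pi)))"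

datatype rv_idx = HP nat | HM nat | ZP | ZM | PP nat | PM nat

text \<open>All random variables collected into one complex-valued family
  (the real phases embedded via complex_of_real), to express mutual independence.\<close>
fun rv_family ::
  "(nat \<Rightarrow> 'a \<Rightarrow> complex) \<Rightarrow> (nat \<Rightarrow> 'a \<Rightarrow> complex) \<Rightarrow> ('a \<Rightarrow> complex) \<Rightarrow> ('a \<Rightarrow> complex)
   \<Rightarrow> (nat \<Rightarrow> 'a \<Rightarrow> real) \<Rightarrow> (nat \<Rightarrow> 'a \<Rightarrow> real) \<Rightarrow> rv_idx \<Rightarrow> 'a \<Rightarrow> complex" where
  "rv_family hp hm zp zm pp pm (HP k) = hp k"
| "rv_family hp hm zp zm pp pm (HM k) = hm k"
| "rv_family hp hm zp zm pp pm ZP = zp"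
| "rv_family hp hm zp zm pp pm ZM = zm"
| "rv_family hp hm zp zm pp pm (PP k) = (\<lambda>\<omega>. complex_of_real (pp k \<omega>))"
| "rv_family hp hm zp zm pp pm (PM k) = (\<lambda>\<omega>. complex_of_real (pm k \<omega>))"

definition rv_index_set :: "nat \<Rightarrow> rv_idx set" where
  "rv_index_set K = HP ` {1..K} \<union> HM ` {1..K} \<union> {ZP, ZM} \<union> PP ` {1..K} \<union> PM ` {1..K}"

end

theory Submission
  imports Defs
begin

text \<open>
  Say that a complex random variable \<open>Y\<close> has circular moments of power \<open>a\<close> if
  \<open>E Y = 0\<close>, \<open>E Y\<^sup>2 = 0\<close>, \<open>E |Y|\<^sup>2 = a\<close> and \<open>E |Y|\<^sup>4 = 2 a\<^sup>2\<close>: its moments up to order four are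
  those of \<open>CN(0,a)\<close>. A \<open>CN(0,\<nu>)\<close> variable has this property with power \<open>\<nu>\<close>; multiplying by an
  independent factor of constant modulus \<open>c\<close> multiplies the power by \<open>c\<^sup>2\<close>; and for independent
  summands the powers add, since every cross term of \<open>|Y + W|\<^sup>2\<close> and \<open>|Y + W|\<^sup>4\<close> factorises
  into expectations one of which is \<open>E Y\<close>, \<open>E W\<close> or \<open>E W\<^sup>2\<close>. Hence \<open>y\<^sub>+\<close> and \<open>y\<^sub>-\<close> are independent
  with circular moments of powers \<open>A\<^sub>\<plusminus> = \<sigma>\<^sub>z\<^sup>2 + \<eta> S\<^sub>\<plusminus>\<close>, so \<open>|y\<^sub>\<plusminus>|\<^sup>2\<close> has mean \<open>A\<^sub>\<plusminus>\<close> and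
  variance \<open>A\<^sub>\<plusminus>\<^sup>2\<close>, and the estimator has mean \<open>(A\<^sub>+ - A\<^sub>-) / \<eta>\<close> and variance
  \<open>(A\<^sub>+\<^sup>2 + A\<^sub>-\<^sup>2) / \<eta>\<^sup>2\<close>.
\<close>

section \<open>Moments of the circularly symmetric complex Gaussian\<close>

lemma borel_measurable_cnj [measurable]: "cnj \<in> borel_measurable borel"
  by (intro borel_measurable_continuous_onI continuous_intros)

lemma borel_measurable_cis [measurable]: "cis \<in> borel_measurable borel"
  by (intro borel_measurable_continuous_onI continuous_intros)

lemma CN_density_nonneg: "\<nu> > 0 \<Longrightarrow> 0 \<le> CN_density \<nu> z"
  unfolding CN_density_def by simp

lemma borel_measurable_CN_density [measurable]: "CN_density \<nu> \<in> borel_measurable borel"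
  unfolding CN_density_def by measurable

lemma CN_density_minus [simp]: "CN_density \<nu> (- z) = CN_density \<nu> z"
  by (simp add: CN_density_def)

lemma CN_density_cnj [simp]: "CN_density \<nu> (cnj z) = CN_density \<nu> z"
  by (simp add: CN_density_def)

lemma CN_density_eq_normal_density_Re_Im:
  assumes "\<nu> > 0"
  shows "CN_density \<nu> z
           = normal_density 0 (sqrt (\<nu>/2)) (Re z) * normal_density 0 (sqrt (\<nu>/2)) (Im z)"
proof -
  have "sqrt (pi * \<nu>) * sqrt (pi * \<nu>) = pi * \<nu>"
    using assms by simp
  moreover have "exp (- (cmod z)\<^sup>2 / \<nu>) = exp (- (Re z)\<^sup>2 / \<nu>) * exp (- (Im z)\<^sup>2 / \<nu>)"
    unfolding exp_add[symmetric] cmod_power2 by (simp add: diff_divide_distrib)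
  ultimately show ?thesis
    using assms by (simp add: CN_density_def normal_density_def field_simps)
qed

lemma nn_integral_lborel_complex_Re_Im:
  assumes [measurable]: "p \<in> borel_measurable borel" "q \<in> borel_measurable borel"
    and "\<And>x. 0 \<le> p x" "\<And>x. 0 \<le> q x"
  shows "(\<integral>\<^sup>+z. ennreal (p (Re z) * q (Im z)) \<partial>lborel)
         = (\<integral>\<^sup>+x. ennreal (p x) \<partial>lborel) * (\<integral>\<^sup>+x. ennreal (q x) \<partial>lborel)"
proof -
  define f where "f = (\<lambda>(b::complex) x. ennreal (if b = 1 then p x else q x))"
  have "(\<integral>\<^sup>+z. (\<Prod>b\<in>Basis. f b (z \<bullet> b)) \<partial>lborel) = (\<Prod>b\<in>Basis. integral\<^sup>N lborel (f b))"
    by (rule nn_integral_lborel_prod) (auto simp: f_def)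
  moreover have "(\<Prod>b\<in>Basis. f b (z \<bullet> b)) = ennreal (p (Re z) * q (Im z))" for z
    using assms(3,4) by (simp add: f_def Basis_complex_def ennreal_mult inner_complex_def)
  ultimately show ?thesis
    by (simp add: f_def Basis_complex_def)
qed

text \<open>The real and imaginary parts of a \<open>CN(0,\<nu>)\<close> variable are independent \<open>N(0,\<nu>/2)\<close>.\<close>
lemma has_bochner_integral_CN_density_even_powers:
  assumes "\<nu> > 0"
  shows "has_bochner_integral lborel (\<lambda>z. CN_density \<nu> z * (Re z ^ (2*i) * Im z ^ (2*j)))
           (fact (2*i) / ((4/\<nu>)^i * fact i) * (fact (2*j) / ((4/\<nu>)^j * fact j)))"
proof (rule has_bochner_integral_nn_integral)
  let ?g = "normal_density 0 (sqrt (\<nu>/2))"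
  have moment: "(\<integral>\<^sup>+x. ennreal (?g x * x ^ (2*k)) \<partial>lborel)
      = ennreal (fact (2*k) / ((4/\<nu>)^k * fact k))" for k
  proof -
    have "has_bochner_integral lborel (\<lambda>x. ?g x * x ^ (2*k)) (fact (2*k) / ((4/\<nu>)^k * fact k))"
      using normal_moment_even[of "sqrt (\<nu>/2)" 0 k] assms by simp
    then show ?thesis
      by (subst nn_integral_eq_integral) (auto simp: has_bochner_integral_iff zero_le_mult_iff)
  qed
  have "(\<integral>\<^sup>+z. ennreal (CN_density \<nu> z * (Re z ^ (2*i) * Im z ^ (2*j))) \<partial>lborel)
      = (\<integral>\<^sup>+z. ennreal ((?g (Re z) * Re z ^ (2*i)) * (?g (Im z) * Im z ^ (2*j))) \<partial>lborel)"
    by (simp add: CN_density_eq_normal_density_Re_Im[OF assms] ac_simps)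
  also have "\<dots> = (\<integral>\<^sup>+x. ennreal (?g x * x ^ (2*i)) \<partial>lborel)
                  * (\<integral>\<^sup>+x. ennreal (?g x * x ^ (2*j)) \<partial>lborel)"
    by (rule nn_integral_lborel_complex_Re_Im) (auto simp: zero_le_mult_iff)
  also have "\<dots> = ennreal (fact (2*i) / ((4/\<nu>)^i * fact i) * (fact (2*j) / ((4/\<nu>)^j * fact j)))"
    unfolding moment using assms by (intro ennreal_mult[symmetric]) auto
  finally show "(\<integral>\<^sup>+z. ennreal (CN_density \<nu> z * (Re z ^ (2*i) * Im z ^ (2*j))) \<partial>lborel)
      = ennreal (fact (2*i) / ((4/\<nu>)^i * fact i) * (fact (2*j) / ((4/\<nu>)^j * fact j)))" .
qed (use assms CN_density_nonneg in \<open>auto simp: zero_le_mult_iff\<close>)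

lemma has_bochner_integral_CN_density_cmod_power2:
  assumes "\<nu> > 0"
  shows "has_bochner_integral lborel (\<lambda>z. CN_density \<nu> z * cmod z ^ 2) \<nu>"
proof -
  have "has_bochner_integral lborel
      (\<lambda>z. CN_density \<nu> z * (Re z ^ (2*1) * Im z ^ (2*0))
         + CN_density \<nu> z * (Re z ^ (2*0) * Im z ^ (2*1)))
      (\<nu>/2 + \<nu>/2)"
    using has_bochner_integral_add[OF has_bochner_integral_CN_density_even_powers[OF assms, of 1 0]
        has_bochner_integral_CN_density_even_powers[OF assms, of 0 1]] by simp
  then show ?thesis by (simp add: cmod_power2 distrib_left)
qed

lemma has_bochner_integral_CN_density_cmod_power4:
  assumes "\<nu> > 0"
  shows "has_bochner_integral lborel (\<lambda>z. CN_density \<nu> z * cmod z ^ 4) (2 * \<nu>^2)"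
proof -
  note m = has_bochner_integral_CN_density_even_powers[OF assms]
  have "has_bochner_integral lborel
      (\<lambda>z. CN_density \<nu> z * (Re z ^ (2*2) * Im z ^ (2*0))
         + 2 * (CN_density \<nu> z * (Re z ^ (2*1) * Im z ^ (2*1)))
         + CN_density \<nu> z * (Re z ^ (2*0) * Im z ^ (2*2)))
      (2 * \<nu>^2)"
    using has_bochner_integral_add[OF has_bochner_integral_add[OF m[of 2 0]
          has_bochner_integral_mult_right[OF m[of 1 1], of 2]] m[of 0 2]]
    by (simp add: fact_numeral power2_eq_square field_simps)
  moreover have "cmod z ^ 4 = Re z ^ 4 + 2 * (Re z ^ 2 * Im z ^ 2) + Im z ^ 4" for z
  proof -
    have "cmod z ^ 4 = (Re z ^ 2 + Im z ^ 2) ^ 2"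
      by (simp add: cmod_power2[symmetric])
    then show ?thesis by algebra
  qed
  ultimately show ?thesis
    by (elim has_bochner_integral_cong[THEN iffD1, rotated 3])
      (simp_all add: power2_eq_square algebra_simps)
qed

lemma lborel_distr_uminus_complex: "distr lborel borel uminus = (lborel :: complex measure)"
  using lborel_affine[of "-1" "0::complex"] by (simp add: density_1)

lemma lborel_distr_cnj: "distr lborel borel cnj = (lborel :: complex measure)"
proof -
  have "(\<lambda>x::complex. 0 + (\<Sum>j\<in>Basis. ((if j = 1 then 1 else -1) * (x \<bullet> j)) *\<^sub>R j)) = cnj"
    by (auto simp: Basis_complex_def inner_complex_def complex_eq_iff)
  moreover have "(\<Prod>j\<in>(Basis::complex set). \<bar>if j = 1 then 1 else -1::real\<bar>) = 1"
    by (simp add: Basis_complex_def)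
  ultimately show ?thesis
    using lborel_affine_euclidean[where c="\<lambda>j::complex. if j = 1 then 1 else -1" and t=0]
    by (simp add: density_1)
qed

lemma integral_CN_density_scaleR_eq_0: "(\<integral>z. CN_density \<nu> z *\<^sub>R z \<partial>lborel) = 0"
proof -
  have "(\<integral>z. CN_density \<nu> z *\<^sub>R z \<partial>lborel) = (\<integral>z. CN_density \<nu> z *\<^sub>R z \<partial>distr lborel borel uminus)"
    by (simp add: lborel_distr_uminus_complex)
  also have "\<dots> = - (\<integral>z. CN_density \<nu> z *\<^sub>R z \<partial>lborel)"
    by (subst integral_distr) simp_all
  finally show ?thesis by simp
qed

text \<open>Conjugation preserves the density, so the integral is real; its real part is
  \<open>E (Re z)\<^sup>2 - E (Im z)\<^sup>2 = 0\<close>.\<close>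
lemma integral_CN_density_scaleR_power2_eq_0:
  assumes "\<nu> > 0"
  shows "(\<integral>z. CN_density \<nu> z *\<^sub>R z\<^sup>2 \<partial>lborel) = 0"
proof -
  let ?I = "\<integral>z. CN_density \<nu> z *\<^sub>R z\<^sup>2 \<partial>lborel"
  have "?I = (\<integral>z. CN_density \<nu> z *\<^sub>R z\<^sup>2 \<partial>distr lborel borel cnj)"
    by (simp add: lborel_distr_cnj)
  also have "\<dots> = (\<integral>z. cnj (CN_density \<nu> z *\<^sub>R z\<^sup>2) \<partial>lborel)"
    by (subst integral_distr) simp_all
  also have "\<dots> = cnj ?I"
    by (rule Bochner_Integration.integral_cnj)
  finally have "Im ?I = 0"
    by (metis cnj.sel(2) neg_equal_zero)
  have "integrable lborel (\<lambda>z. CN_density \<nu> z * cmod z ^ 2)"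
    using has_bochner_integral_CN_density_cmod_power2[OF assms]
    by (simp add: has_bochner_integral_iff)
  then have "integrable lborel (\<lambda>z. CN_density \<nu> z *\<^sub>R z\<^sup>2)"
    using CN_density_nonneg[OF assms]
    by (subst integrable_norm_iff[symmetric]) (simp_all add: norm_power)
  then have "Re ?I = (\<integral>z. CN_density \<nu> z * (Re z ^ (2*1) * Im z ^ (2*0))
                         - CN_density \<nu> z * (Re z ^ (2*0) * Im z ^ (2*1)) \<partial>lborel)"
    by (subst integral_Re[symmetric]) (simp_all add: power2_eq_square algebra_simps)
  also have "\<dots> = 0"
    using has_bochner_integral_diff[OF has_bochner_integral_CN_density_even_powers[OF assms, of 1 0]
        has_bochner_integral_CN_density_even_powers[OF assms, of 0 1]]
    by (simp add: has_bochner_integral_iff)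
  finally show ?thesis
    using \<open>Im ?I = 0\<close> by (simp add: complex_eq_iff)
qed

section \<open>Independence and integrability\<close>

lemma (in prob_space) integrable_norm_power_bounded:
  fixes Y :: "'a \<Rightarrow> 'b::real_normed_vector" and f :: "'b \<Rightarrow> 'c::{banach, second_countable_topology}"
  assumes [measurable]: "Y \<in> borel_measurable M" "f \<in> borel_measurable borel"
    and "integrable M (\<lambda>\<omega>. norm (Y \<omega>) ^ m)" "n \<le> m" "\<And>y. norm (f y) \<le> norm y ^ n"
  shows "integrable M (\<lambda>\<omega>. f (Y \<omega>))"
proof (rule Bochner_Integration.integrable_bound)
  show "integrable M (\<lambda>\<omega>. 1 + norm (Y \<omega>) ^ m)"
    using assms(3) by simp
  have power_bound: "t ^ n \<le> 1 + t ^ m" if "0 \<le> t" for t :: real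
  proof (cases "t \<le> 1")
    case True
    then show ?thesis using that power_le_one[of t n] zero_le_power[of t m] by linarith
  next
    case False
    then have "t ^ n \<le> t ^ m"
      using \<open>n \<le> m\<close> by (intro power_increasing) auto
    then show ?thesis by simp
  qed
  show "AE \<omega> in M. norm (f (Y \<omega>)) \<le> norm (1 + norm (Y \<omega>) ^ m)"
  proof (rule AE_I2)
    fix \<omega>
    have "norm (f (Y \<omega>)) \<le> norm (Y \<omega>) ^ n"
      by (rule assms(5))
    also have "\<dots> \<le> 1 + norm (Y \<omega>) ^ m"
      by (rule power_bound) simp
    finally show "norm (f (Y \<omega>)) \<le> norm (1 + norm (Y \<omega>) ^ m)"
      by simp
  qed
qed simp

lemma (in prob_space) indep_var_has_bochner_integral_mult:
  fixes Y W :: "'a \<Rightarrow> 'b::topological_space"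
    and f g :: "'b \<Rightarrow> 'c::{real_normed_field, banach, second_countable_topology}"
  assumes "indep_var borel Y borel W"
    and "f \<in> borel_measurable borel" "g \<in> borel_measurable borel"
    and "has_bochner_integral M (\<lambda>\<omega>. f (Y \<omega>)) a" "has_bochner_integral M (\<lambda>\<omega>. g (W \<omega>)) b"
  shows "has_bochner_integral M (\<lambda>\<omega>. f (Y \<omega>) * g (W \<omega>)) (a * b)"
proof -
  have "indep_var borel (\<lambda>\<omega>. f (Y \<omega>)) borel (\<lambda>\<omega>. g (W \<omega>))"
    using indep_var_compose[OF assms(1-3)] by (simp add: comp_def)
  then show ?thesis
    using indep_var_lebesgue_integral indep_var_integrable assms(4,5)
    by (auto simp: has_bochner_integral_iff)
qed

lemma (in prob_space) indep_vars_sum_banach: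
  fixes X :: "'i \<Rightarrow> 'a \<Rightarrow> 'b::{banach, second_countable_topology}"
  assumes "finite I" "i \<notin> I" and indep: "indep_vars (\<lambda>_. borel) X (insert i I)"
  shows "indep_var borel (X i) borel (\<lambda>\<omega>. \<Sum>j\<in>I. X j \<omega>)"
proof -
  have "indep_var
    borel ((\<lambda>f. f i) \<circ> (\<lambda>\<omega>. restrict (\<lambda>i. X i \<omega>) {i}))
    borel ((\<lambda>f. \<Sum>j\<in>I. f j) \<circ> (\<lambda>\<omega>. restrict (\<lambda>i. X i \<omega>) I))"
    using assms by (intro indep_var_compose[OF indep_var_restrict[OF indep]]) auto
  also have "((\<lambda>f. f i) \<circ> (\<lambda>\<omega>. restrict (\<lambda>i. X i \<omega>) {i})) = X i"
    by auto
  also have "((\<lambda>f. \<Sum>j\<in>I. f j) \<circ> (\<lambda>\<omega>. restrict (\<lambda>i. X i \<omega>) I)) = (\<lambda>\<omega>. \<Sum>j\<in>I. X j \<omega>)"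
    by (auto cong: rev_conj_cong)
  finally show ?thesis .
qed

lemma (in prob_space) indep_var_of_indep_vars:
  assumes "indep_vars M' X I" and "i \<in> I" "j \<in> I" "i \<noteq> j"
  shows "indep_var (M' i) (X i) (M' j) (X j)"
proof -
  have "indep_var (M' i) ((\<lambda>x. x i) \<circ> (\<lambda>\<omega>. restrict (\<lambda>k. X k \<omega>) {i}))
                  (M' j) ((\<lambda>x. x j) \<circ> (\<lambda>\<omega>. restrict (\<lambda>k. X k \<omega>) {j}))"
    using assms by (intro indep_var_compose[OF indep_var_restrict] measurable_component_singleton) auto
  then show ?thesis
    by (simp add: comp_def)
qed

section \<open>Circular moments\<close>

definition (in prob_space) circular_moments :: "real \<Rightarrow> ('a \<Rightarrow> complex) \<Rightarrow> bool" where
  "circular_moments a Y \<longleftrightarrow>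
     Y \<in> borel_measurable M \<and> expectation Y = 0 \<and> expectation (\<lambda>\<omega>. (Y \<omega>)\<^sup>2) = 0 \<and>
     has_bochner_integral M (\<lambda>\<omega>. cmod (Y \<omega>) ^ 2) a \<and>
     has_bochner_integral M (\<lambda>\<omega>. cmod (Y \<omega>) ^ 4) (2 * a\<^sup>2)"

lemma (in prob_space) circular_moments_circ_gauss:
  assumes "circ_gauss M \<nu> X" and "\<nu> > 0"
  shows "circular_moments \<nu> X"
proof -
  have dist: "distr M lborel X = density lborel (\<lambda>z. ennreal (CN_density \<nu> z))"
    and [measurable]: "X \<in> borel_measurable M"
    using assms(1) unfolding circ_gauss_def distributed_def by auto
  have integral_transfer: "(\<integral>\<omega>. F (X \<omega>) \<partial>M) = (\<integral>z. CN_density \<nu> z *\<^sub>R F z \<partial>lborel)"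
    and has_integral_transfer: "has_bochner_integral lborel (\<lambda>z. CN_density \<nu> z *\<^sub>R F z) c
      \<Longrightarrow> has_bochner_integral M (\<lambda>\<omega>. F (X \<omega>)) c"
    if [measurable]: "F \<in> borel_measurable borel"
    for F :: "complex \<Rightarrow> 'b::{banach, second_countable_topology}" and c
    using integral_distr[of X M lborel F] integrable_distr_eq[of X M lborel F]
      integral_density[of F lborel "CN_density \<nu>"] integrable_density[of F lborel "CN_density \<nu>"]
      CN_density_nonneg[OF assms(2)]
    by (simp_all add: dist has_bochner_integral_iff)
  show ?thesis
    unfolding circular_moments_def
    using integral_transfer[of "\<lambda>z. z"] integral_transfer[of "\<lambda>z. z\<^sup>2"]
      integral_CN_density_scaleR_eq_0 integral_CN_density_scaleR_power2_eq_0[OF assms(2)]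
      has_integral_transfer[of "\<lambda>z. cmod z ^ 2"]
      has_bochner_integral_CN_density_cmod_power2[OF assms(2)]
      has_integral_transfer[of "\<lambda>z. cmod z ^ 4"]
      has_bochner_integral_CN_density_cmod_power4[OF assms(2)]
    by simp
qed

lemma cmod_add_power2: "cmod (y + w) ^ 2 = cmod y ^ 2 + cmod w ^ 2 + 2 * Re (y * cnj w)"
  unfolding cmod_power2 by (simp add: power2_eq_square algebra_simps)

lemma cmod_add_power4:
  "cmod (y + w) ^ 4 = cmod y ^ 4 + cmod w ^ 4 + 4 * (cmod y ^ 2 * cmod w ^ 2)
     + 2 * Re (y\<^sup>2 * (cnj w)\<^sup>2) + 4 * Re ((of_real (cmod y ^ 2) * y) * cnj w)
     + 4 * Re (y * (of_real (cmod w ^ 2) * cnj w))"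
proof -
  have cmod_power4: "cmod z ^ 4 = (Re z ^ 2 + Im z ^ 2) ^ 2" for z
    by (simp add: cmod_power2[symmetric])
  show ?thesis
    unfolding cmod_power4 cmod_power2 by (simp add: power2_eq_square algebra_simps)
qed

lemma (in prob_space) circular_moments_integrable:
  fixes f :: "complex \<Rightarrow> 'b::{banach, second_countable_topology}"
  assumes "circular_moments a Y" and [measurable]: "f \<in> borel_measurable borel"
    and "n \<le> 4" and "\<And>y. norm (f y) \<le> cmod y ^ n"
  shows "integrable M (\<lambda>\<omega>. f (Y \<omega>))"
proof (rule integrable_norm_power_bounded[where Y=Y and f=f and m=4])
  show "Y \<in> borel_measurable M" "integrable M (\<lambda>\<omega>. norm (Y \<omega>) ^ 4)"
    using assms(1) by (auto simp: circular_moments_def has_bochner_integral_iff)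
qed (use assms in auto)

lemma (in prob_space) circular_moments_has_bochner_integral:
  assumes "circular_moments a Y"
  shows "has_bochner_integral M Y 0" and "has_bochner_integral M (\<lambda>\<omega>. (Y \<omega>)\<^sup>2) 0"
  using circular_moments_integrable[OF assms, of "\<lambda>y. y" 1]
    circular_moments_integrable[OF assms, of "\<lambda>y. y\<^sup>2" 2] assms
  by (auto simp: circular_moments_def has_bochner_integral_iff norm_power)

lemma (in prob_space) circular_moments_mult_indep:
  assumes Y: "circular_moments a Y" and indep: "indep_var borel Y borel U"
    and [measurable]: "U \<in> borel_measurable M" and norm_U: "\<And>\<omega>. cmod (U \<omega>) = c"
  shows "circular_moments (c\<^sup>2 * a) (\<lambda>\<omega>. Y \<omega> * U \<omega>)"
proof -
  have [measurable]: "Y \<in> borel_measurable M"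
    and Y2: "has_bochner_integral M (\<lambda>\<omega>. cmod (Y \<omega>) ^ 2) a"
    and Y4: "has_bochner_integral M (\<lambda>\<omega>. cmod (Y \<omega>) ^ 4) (2 * a\<^sup>2)"
    using Y by (simp_all add: circular_moments_def)
  have U: "has_bochner_integral M U (expectation U)"
    and U2: "has_bochner_integral M (\<lambda>\<omega>. (U \<omega>)\<^sup>2) (expectation (\<lambda>\<omega>. (U \<omega>)\<^sup>2))"
    using norm_U by (auto simp: has_bochner_integral_iff norm_power intro!: integrable_const_bound)
  have "has_bochner_integral M (\<lambda>\<omega>. Y \<omega> * U \<omega>) (0 * expectation U)"
    by (rule indep_var_has_bochner_integral_mult[OF indep, where f="\<lambda>y. y" and g="\<lambda>u. u"])
      (use circular_moments_has_bochner_integral(1)[OF Y] U in simp_all)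
  moreover have "has_bochner_integral M (\<lambda>\<omega>. (Y \<omega>)\<^sup>2 * (U \<omega>)\<^sup>2) (0 * expectation (\<lambda>\<omega>. (U \<omega>)\<^sup>2))"
    by (rule indep_var_has_bochner_integral_mult[OF indep, where f="\<lambda>y. y\<^sup>2" and g="\<lambda>u. u\<^sup>2"])
      (use circular_moments_has_bochner_integral(2)[OF Y] U2 in simp_all)
  moreover have "has_bochner_integral M (\<lambda>\<omega>. cmod (Y \<omega> * U \<omega>) ^ 2) (c\<^sup>2 * a)"
    using has_bochner_integral_mult_right[OF Y2, of "c\<^sup>2"]
    by (simp add: norm_mult norm_U power_mult_distrib mult.commute)
  moreover have "has_bochner_integral M (\<lambda>\<omega>. cmod (Y \<omega> * U \<omega>) ^ 4) (2 * (c\<^sup>2 * a)\<^sup>2)"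
    using has_bochner_integral_mult_right[OF Y4, of "c ^ 4"]
    by (simp add: norm_mult norm_U power_mult_distrib ac_simps flip: power_mult)
  ultimately show ?thesis
    by (simp add: circular_moments_def has_bochner_integral_iff power_mult_distrib)
qed

lemma (in prob_space) circular_moments_mult_cis:
  assumes "circ_gauss M v h" and "v > 0" and "indep_var borel h borel \<Phi>"
    and [measurable]: "\<Phi> \<in> borel_measurable M"
  shows "circular_moments (d\<^sup>2 * v) (\<lambda>\<omega>. h \<omega> * (of_real d * cis (Re (\<Phi> \<omega>))))"
proof -
  from indep_var_compose[OF assms(3), of "\<lambda>y. y" borel "\<lambda>z. of_real d * cis (Re z)" borel]
  have "indep_var borel h borel (\<lambda>\<omega>. of_real d * cis (Re (\<Phi> \<omega>)))"
    by (simp add: comp_def)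
  from circular_moments_mult_indep[OF circular_moments_circ_gauss[OF assms(1,2)] this, of "\<bar>d\<bar>"]
  show ?thesis
    by (simp add: norm_mult)
qed

lemma (in prob_space) circular_moments_indep_mult_eq_0:
  fixes f g :: "complex \<Rightarrow> complex"
  assumes Y: "circular_moments a Y" and W: "circular_moments b W"
    and indep: "indep_var borel Y borel W"
    and [measurable]: "f \<in> borel_measurable borel" "g \<in> borel_measurable borel"
    and "i \<le> 4" "\<And>y. norm (f y) \<le> cmod y ^ i" "j \<le> 4" "\<And>w. norm (g w) \<le> cmod w ^ j"
    and "expectation (\<lambda>\<omega>. f (Y \<omega>)) = 0 \<or> expectation (\<lambda>\<omega>. g (W \<omega>)) = 0"
  shows "has_bochner_integral M (\<lambda>\<omega>. f (Y \<omega>) * g (W \<omega>)) 0"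
proof -
  have "has_bochner_integral M (\<lambda>\<omega>. f (Y \<omega>) * g (W \<omega>))
      (expectation (\<lambda>\<omega>. f (Y \<omega>)) * expectation (\<lambda>\<omega>. g (W \<omega>)))"
    using circular_moments_integrable[OF Y assms(4,6,7)] circular_moments_integrable[OF W assms(5,8,9)]
    by (intro indep_var_has_bochner_integral_mult[OF indep])
      (simp_all add: has_bochner_integral_iff)
  then show ?thesis
    using assms(10) by auto
qed

lemma (in prob_space) circular_moments_add_indep:
  assumes Y: "circular_moments a Y" and W: "circular_moments b W"
    and indep: "indep_var borel Y borel W"
  shows "circular_moments (a + b) (\<lambda>\<omega>. Y \<omega> + W \<omega>)"
proof -
  have [measurable]: "Y \<in> borel_measurable M" "W \<in> borel_measurable M"
    and EY: "expectation Y = 0" and EW: "expectation W = 0" and EW2: "expectation (\<lambda>\<omega>. (W \<omega>)\<^sup>2) = 0"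
    and Y2: "has_bochner_integral M (\<lambda>\<omega>. cmod (Y \<omega>) ^ 2) a"
    and Y4: "has_bochner_integral M (\<lambda>\<omega>. cmod (Y \<omega>) ^ 4) (2 * a\<^sup>2)"
    and W2: "has_bochner_integral M (\<lambda>\<omega>. cmod (W \<omega>) ^ 2) b"
    and W4: "has_bochner_integral M (\<lambda>\<omega>. cmod (W \<omega>) ^ 4) (2 * b\<^sup>2)"
    using Y W by (simp_all add: circular_moments_def)
  note cross = circular_moments_indep_mult_eq_0[OF Y W indep]
  have YW: "has_bochner_integral M (\<lambda>\<omega>. Y \<omega> * W \<omega>) 0"
    using cross[of "\<lambda>y. y" "\<lambda>w. w" 1 1] EY by simp
  have "has_bochner_integral M (\<lambda>\<omega>. Y \<omega> + W \<omega>) (0 + 0)"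
    using circular_moments_has_bochner_integral(1)[OF Y] circular_moments_has_bochner_integral(1)[OF W]
    by (rule has_bochner_integral_add)
  moreover have "has_bochner_integral M (\<lambda>\<omega>. (Y \<omega>)\<^sup>2 + 2 * (Y \<omega> * W \<omega>) + (W \<omega>)\<^sup>2) (0 + 2 * 0 + 0)"
    using circular_moments_has_bochner_integral(2)[OF Y] circular_moments_has_bochner_integral(2)[OF W] YW
    by (intro has_bochner_integral_add has_bochner_integral_mult_right)
  moreover have "has_bochner_integral M
      (\<lambda>\<omega>. cmod (Y \<omega>) ^ 2 + cmod (W \<omega>) ^ 2 + 2 * Re (Y \<omega> * cnj (W \<omega>))) (a + b + 2 * Re 0)"
    using cross[of "\<lambda>y. y" cnj 1 1] EY
    by (intro has_bochner_integral_add has_bochner_integral_mult_right has_bochner_integral_Re Y2 W2)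
      simp_all
  moreover have "has_bochner_integral M (\<lambda>\<omega>. cmod (Y \<omega>) ^ 4 + cmod (W \<omega>) ^ 4
        + 4 * (cmod (Y \<omega>) ^ 2 * cmod (W \<omega>) ^ 2) + 2 * Re ((Y \<omega>)\<^sup>2 * (cnj (W \<omega>))\<^sup>2)
        + 4 * Re ((of_real (cmod (Y \<omega>) ^ 2) * Y \<omega>) * cnj (W \<omega>))
        + 4 * Re (Y \<omega> * (of_real (cmod (W \<omega>) ^ 2) * cnj (W \<omega>))))
      (2 * a\<^sup>2 + 2 * b\<^sup>2 + 4 * (a * b) + 2 * Re 0 + 4 * Re 0 + 4 * Re 0)"
  proof (intro has_bochner_integral_add has_bochner_integral_mult_right has_bochner_integral_Re Y4 W4)
    show "has_bochner_integral M (\<lambda>\<omega>. cmod (Y \<omega>) ^ 2 * cmod (W \<omega>) ^ 2) (a * b)"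
      using Y2 W2 by (intro indep_var_has_bochner_integral_mult[OF indep]) simp_all
    show "has_bochner_integral M (\<lambda>\<omega>. (Y \<omega>)\<^sup>2 * (cnj (W \<omega>))\<^sup>2) 0"
      using cross[of "\<lambda>y. y\<^sup>2" "\<lambda>w. (cnj w)\<^sup>2" 2 2] EW2
      by (simp add: norm_power flip: complex_cnj_power)
    show "has_bochner_integral M (\<lambda>\<omega>. of_real (cmod (Y \<omega>) ^ 2) * Y \<omega> * cnj (W \<omega>)) 0"
      using cross[of "\<lambda>y. of_real (cmod y ^ 2) * y" cnj 3 1] EW
      by (simp add: norm_mult power2_eq_square power3_eq_cube)
    show "has_bochner_integral M (\<lambda>\<omega>. Y \<omega> * (of_real (cmod (W \<omega>) ^ 2) * cnj (W \<omega>))) 0"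
      using cross[of "\<lambda>y. y" "\<lambda>w. of_real (cmod w ^ 2) * cnj w" 1 3] EY
      by (simp add: norm_mult power2_eq_square power3_eq_cube)
  qed
  ultimately show ?thesis
    unfolding circular_moments_def cmod_add_power2 cmod_add_power4
    by (simp add: has_bochner_integral_iff power2_sum power2_eq_square algebra_simps)
qed

lemma (in prob_space) circular_moments_sum_indep:
  assumes "finite I" and "indep_vars (\<lambda>_. borel) W I" and "\<And>i. i \<in> I \<Longrightarrow> circular_moments (a i) (W i)"
  shows "circular_moments (\<Sum>i\<in>I. a i) (\<lambda>\<omega>. \<Sum>i\<in>I. W i \<omega>)"
  using assms
proof (induction I rule: finite_induct)
  case empty
  have "circular_moments 0 (\<lambda>_. 0)"
    unfolding circular_moments_def by (simp add: has_bochner_integral_zero)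
  then show ?case
    by simp
next
  case (insert i I)
  have "indep_vars (\<lambda>_. borel) W I"
    using insert.prems(1) by (rule indep_vars_subset) auto
  then have "circular_moments (\<Sum>i\<in>I. a i) (\<lambda>\<omega>. \<Sum>i\<in>I. W i \<omega>)"
    using insert.prems(2) by (rule insert.IH) simp
  moreover have "indep_var borel (W i) borel (\<lambda>\<omega>. \<Sum>j\<in>I. W j \<omega>)"
    using insert.hyps insert.prems(1) by (rule indep_vars_sum_banach)
  ultimately have "circular_moments (a i + (\<Sum>i\<in>I. a i)) (\<lambda>\<omega>. W i \<omega> + (\<Sum>i\<in>I. W i \<omega>))"
    using insert.prems(2) by (intro circular_moments_add_indep) simp_all
  then show ?case
    using insert.hyps by simp
qed

lemma (in prob_space) circular_moments_norm_square_diff: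
  fixes c :: real
  assumes Y: "circular_moments a Y" and W: "circular_moments b W"
    and indep: "indep_var borel Y borel W"
  defines "D \<equiv> \<lambda>\<omega>. (cmod (Y \<omega>) ^ 2 - cmod (W \<omega>) ^ 2) / c"
  shows "integrable M D" and "integrable M (\<lambda>\<omega>. (D \<omega>)\<^sup>2)"
    and "expectation D = (a - b) / c" and "variance D = (a\<^sup>2 + b\<^sup>2) / c\<^sup>2"
proof -
  have [measurable]: "Y \<in> borel_measurable M" "W \<in> borel_measurable M"
    and Y2: "has_bochner_integral M (\<lambda>\<omega>. cmod (Y \<omega>) ^ 2) a"
    and Y4: "has_bochner_integral M (\<lambda>\<omega>. cmod (Y \<omega>) ^ 4) (2 * a\<^sup>2)"
    and W2: "has_bochner_integral M (\<lambda>\<omega>. cmod (W \<omega>) ^ 2) b"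
    and W4: "has_bochner_integral M (\<lambda>\<omega>. cmod (W \<omega>) ^ 4) (2 * b\<^sup>2)"
    using Y W by (simp_all add: circular_moments_def)
  have "has_bochner_integral M D ((a - b) / c)"
    unfolding D_def by (intro has_bochner_integral_divide_zero has_bochner_integral_diff Y2 W2)
  then show "integrable M D" and ED: "expectation D = (a - b) / c"
    by (simp_all add: has_bochner_integral_iff)
  have "has_bochner_integral M (\<lambda>\<omega>. cmod (Y \<omega>) ^ 2 * cmod (W \<omega>) ^ 2) (a * b)"
    using Y2 W2 by (intro indep_var_has_bochner_integral_mult[OF indep]) simp_all
  then have "has_bochner_integral M
      (\<lambda>\<omega>. (cmod (Y \<omega>) ^ 4 - 2 * (cmod (Y \<omega>) ^ 2 * cmod (W \<omega>) ^ 2) + cmod (W \<omega>) ^ 4) / c\<^sup>2)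
      ((2 * a\<^sup>2 - 2 * (a * b) + 2 * b\<^sup>2) / c\<^sup>2)"
    by (intro has_bochner_integral_divide_zero has_bochner_integral_add has_bochner_integral_diff
        has_bochner_integral_mult_right Y4 W4)
  moreover have "(cmod y ^ 4 - 2 * (cmod y ^ 2 * cmod w ^ 2) + cmod w ^ 4) / c\<^sup>2
      = ((cmod y ^ 2 - cmod w ^ 2) / c)\<^sup>2" for y w
    by (simp add: power_divide power2_diff flip: power_mult)
  ultimately have "has_bochner_integral M (\<lambda>\<omega>. (D \<omega>)\<^sup>2) ((2 * a\<^sup>2 - 2 * (a * b) + 2 * b\<^sup>2) / c\<^sup>2)"
    by (simp add: D_def)
  then have D2: "integrable M (\<lambda>\<omega>. (D \<omega>)\<^sup>2)"
    and ED2: "expectation (\<lambda>\<omega>. (D \<omega>)\<^sup>2) = (2 * a\<^sup>2 - 2 * (a * b) + 2 * b\<^sup>2) / c\<^sup>2"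
    by (simp_all add: has_bochner_integral_iff)
  then show "integrable M (\<lambda>\<omega>. (D \<omega>)\<^sup>2)"
    by simp
  have "(2 * a\<^sup>2 - 2 * (a * b) + 2 * b\<^sup>2) - (a - b)\<^sup>2 = a\<^sup>2 + b\<^sup>2"
    by (simp add: power2_diff)
  then show "variance D = (a\<^sup>2 + b\<^sup>2) / c\<^sup>2"
    using variance_eq[OF \<open>integrable M D\<close> D2] ED ED2
    by (simp add: power_divide flip: diff_divide_distrib)
qed

section \<open>The received signals\<close>

definition branch_indices :: "nat \<Rightarrow> (nat \<Rightarrow> 'i) \<Rightarrow> (nat \<Rightarrow> 'i) \<Rightarrow> 'i \<Rightarrow> 'i set" where
  "branch_indices n H P Z = H ` {1..n} \<union> P ` {1..n} \<union> {Z}"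

text \<open>The phases are stored in the family as complex numbers, hence the \<open>Re\<close>.\<close>
definition branch_signal ::
    "nat \<Rightarrow> (nat \<Rightarrow> real) \<Rightarrow> (nat \<Rightarrow> 'i) \<Rightarrow> (nat \<Rightarrow> 'i) \<Rightarrow> 'i \<Rightarrow> ('i \<Rightarrow> complex) \<Rightarrow> complex" where
  "branch_signal n d H P Z x = (\<Sum>k=1..n. x (H k) * (of_real (d k) * cis (Re (x (P k))))) + x Z"

lemma branch_signal_restrict:
  assumes "branch_indices n H P Z \<subseteq> A"
  shows "branch_signal n d H P Z (restrict x A) = branch_signal n d H P Z x"
  using assms unfolding branch_signal_def branch_indices_def
  by (auto simp: image_subset_iff intro!: sum.cong)

lemma borel_measurable_branch_signal:
  assumes "branch_indices n H P Z \<subseteq> A"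
  shows "branch_signal n d H P Z \<in> borel_measurable (PiM A (\<lambda>_. borel))"
proof -
  have component: "(\<lambda>x. x i) \<in> borel_measurable (PiM A (\<lambda>_. borel))" if "i \<in> A" for i
    using that by (rule measurable_component_singleton)
  have "(\<lambda>x. \<Sum>k=1..n. x (H k) * (of_real (d k) * cis (Re (x (P k)))))
      \<in> borel_measurable (PiM A (\<lambda>_. borel))"
  proof (rule borel_measurable_sum)
    fix k assume "k \<in> {1..n}"
    then have [measurable]: "(\<lambda>x. x (H k)) \<in> borel_measurable (PiM A (\<lambda>_. borel))"
      "(\<lambda>x. x (P k)) \<in> borel_measurable (PiM A (\<lambda>_. borel))"
      using assms by (auto simp: branch_indices_def intro!: component)
    show "(\<lambda>x. x (H k) * (of_real (d k) * cis (Re (x (P k)))))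
        \<in> borel_measurable (PiM A (\<lambda>_. borel))"
      by measurable
  qed
  moreover have "(\<lambda>x. x Z) \<in> borel_measurable (PiM A (\<lambda>_. borel))"
    using assms by (auto simp: branch_indices_def intro!: component)
  ultimately show ?thesis
    unfolding branch_signal_def[abs_def] by (rule borel_measurable_add)
qed

lemma (in prob_space) indep_var_branch_signal:
  assumes "indep_vars (\<lambda>_. borel) X J"
    and "branch_indices n H P Z \<inter> branch_indices n' H' P' Z' = {}"
    and "branch_indices n H P Z \<subseteq> J" and "branch_indices n' H' P' Z' \<subseteq> J"
  shows "indep_var borel (\<lambda>\<omega>. branch_signal n d H P Z (\<lambda>i. X i \<omega>))
                   borel (\<lambda>\<omega>. branch_signal n' d' H' P' Z' (\<lambda>i. X i \<omega>))"
proof -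
  let ?A = "branch_indices n H P Z" and ?B = "branch_indices n' H' P' Z'"
  have "indep_var borel (branch_signal n d H P Z \<circ> (\<lambda>\<omega>. restrict (\<lambda>i. X i \<omega>) ?A))
                  borel (branch_signal n' d' H' P' Z' \<circ> (\<lambda>\<omega>. restrict (\<lambda>i. X i \<omega>) ?B))"
    using indep_var_restrict[OF assms] by (rule indep_var_compose)
      (simp_all add: borel_measurable_branch_signal)
  then show ?thesis
    by (simp add: comp_def branch_signal_restrict)
qed

lemma (in prob_space) indep_vars_branch_terms:
  assumes indep: "indep_vars (\<lambda>_. borel) X (branch_indices n H P Z)"
    and "inj H" "inj P" "range H \<inter> range P = {}" "Z \<notin> range H" "Z \<notin> range P"
  shows "indep_vars (\<lambda>_. borel)
      (\<lambda>k \<omega>. if k = 0 then X Z \<omega> else X (H k) \<omega> * (of_real (d k) * cis (Re (X (P k) \<omega>)))) {0..n}"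
proof -
  define B where "B k = (if k = 0 then {Z} else {H k, P k})" for k
  define F where "F k = (\<lambda>x. if k = 0 then x Z else x (H k) * (of_real (d k) * cis (Re (x (P k)))))"
    for k
  have "indep_vars (\<lambda>_. borel) (\<lambda>k \<omega>. F k (restrict (\<lambda>i. X i \<omega>) (B k))) {0..n}"
  proof (rule indep_vars_compose2[OF indep_vars_restrict[OF indep]])
    show "B k \<subseteq> branch_indices n H P Z" if "k \<in> {0..n}" for k
      using that by (auto simp: B_def branch_indices_def)
    show "disjoint_family_on B {0..n}"
      using assms(2-6) by (auto simp: disjoint_family_on_def B_def inj_eq)
    show "F k \<in> borel_measurable (PiM (B k) (\<lambda>_. borel))" if "k \<in> {0..n}" for k
    proof (cases "k = 0")
      case True
      then show ?thesis
        by (simp add: F_def B_def measurable_component_singleton)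
    next
      case False
      have [measurable]: "(\<lambda>x. x (H k)) \<in> borel_measurable (PiM {H k, P k} (\<lambda>_. borel))"
        "(\<lambda>x. x (P k)) \<in> borel_measurable (PiM {H k, P k} (\<lambda>_. borel))"
        by (auto intro: measurable_component_singleton)
      show ?thesis
        using False by (simp add: F_def B_def)
    qed
  qed
  moreover have "F k (restrict (\<lambda>i. X i \<omega>) (B k))
      = (if k = 0 then X Z \<omega> else X (H k) \<omega> * (of_real (d k) * cis (Re (X (P k) \<omega>))))" for k \<omega>
    by (simp add: F_def B_def)
  ultimately show ?thesis
    by simp
qed

lemma (in prob_space) circular_moments_branch_signal:
  assumes indep: "indep_vars (\<lambda>_. borel) X (branch_indices n H P Z)"
    and "inj H" "inj P" "range H \<inter> range P = {}" "Z \<notin> range H" "Z \<notin> range P"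
    and "\<And>k. k \<in> {1..n} \<Longrightarrow> circ_gauss M (v k) (X (H k))" "\<And>k. k \<in> {1..n} \<Longrightarrow> v k > 0"
    and "circ_gauss M \<sigma> (X Z)" "\<sigma> > 0"
  shows "circular_moments (\<sigma> + (\<Sum>k=1..n. (d k)\<^sup>2 * v k)) (\<lambda>\<omega>. branch_signal n d H P Z (\<lambda>i. X i \<omega>))"
proof -
  have "circular_moments (if k = 0 then \<sigma> else (d k)\<^sup>2 * v k)
      (\<lambda>\<omega>. if k = 0 then X Z \<omega> else X (H k) \<omega> * (of_real (d k) * cis (Re (X (P k) \<omega>))))"
    if "k \<in> {0..n}" for k
  proof (cases "k = 0")
    case True
    then show ?thesis
      using circular_moments_circ_gauss assms(9,10) by simp
  next
    case False
    with that have k: "k \<in> {1..n}"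
      by auto
    have "H k \<noteq> P k"
      using assms(4) by auto
    then have "indep_var borel (X (H k)) borel (X (P k))"
      using k by (intro indep_var_of_indep_vars[OF indep]) (auto simp: branch_indices_def)
    moreover have "X (P k) \<in> borel_measurable M"
      using indep k by (auto simp: indep_vars_def branch_indices_def)
    ultimately have "circular_moments ((d k)\<^sup>2 * v k)
        (\<lambda>\<omega>. X (H k) \<omega> * (of_real (d k) * cis (Re (X (P k) \<omega>))))"
      by (rule circular_moments_mult_cis[OF assms(7,8)[OF k]])
    then show ?thesis
      using False by simp
  qed
  from circular_moments_sum_indep[OF _ indep_vars_branch_terms[OF assms(1-6)] this]
  show ?thesis
    by (simp add: sum.atLeast_Suc_atMost branch_signal_def add.commute)
qed

lemma sum_pos_part_diff_neg_part:
  fixes u :: "'a \<Rightarrow> real"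
  shows "(\<Sum>k\<in>A. max (u k) 0) - (\<Sum>k\<in>A. max (- u k) 0) = (\<Sum>k\<in>A. u k)"
  unfolding sum_subtractf[symmetric] by (rule sum.cong) auto

lemma sum_pos_part_add_neg_part:
  fixes u :: "'a \<Rightarrow> real"
  shows "(\<Sum>k\<in>A. max (u k) 0) + (\<Sum>k\<in>A. max (- u k) 0) = (\<Sum>k\<in>A. \<bar>u k\<bar>)"
  unfolding sum.distrib[symmetric] by (rule sum.cong) auto

lemma sum_power2_sqrt_divide_mult_power2:
  fixes \<eta> :: real
  assumes "\<eta> \<ge> 0" and "\<And>k. k \<in> A \<Longrightarrow> w k \<ge> 0" and "\<And>k. k \<in> A \<Longrightarrow> \<mu> k \<noteq> 0"
  shows "(\<Sum>k\<in>A. (sqrt (\<eta> * w k) / \<mu> k)\<^sup>2 * (\<mu> k)\<^sup>2) = \<eta> * (\<Sum>k\<in>A. w k)"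
  unfolding sum_distrib_left using assms by (intro sum.cong) (simp_all add: power_divide)

theorem proposition1:
  fixes M :: "'a measure" and K :: nat and u \<mu> :: "nat \<Rightarrow> real" and \<eta> \<sigma>z2 :: real
    and hp hm :: "nat \<Rightarrow> 'a \<Rightarrow> complex" and zp zm :: "'a \<Rightarrow> complex"
    and php phm :: "nat \<Rightarrow> 'a \<Rightarrow> real"
  assumes "prob_space M"
    and "K \<ge> 1"
    and "\<eta> > 0" and "\<sigma>z2 > 0"
    and "\<And>k. k \<in> {1..K} \<Longrightarrow> \<mu> k > 0"
    and "\<And>k. k \<in> {1..K} \<Longrightarrow> circ_gauss M ((\<mu> k)\<^sup>2) (hp k)"
    and "\<And>k. k \<in> {1..K} \<Longrightarrow> circ_gauss M ((\<mu> k)\<^sup>2) (hm k)"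
    and "circ_gauss M \<sigma>z2 zp" and "circ_gauss M \<sigma>z2 zm"
    and "\<And>k. k \<in> {1..K} \<Longrightarrow> unif_phase M (php k)"
    and "\<And>k. k \<in> {1..K} \<Longrightarrow> unif_phase M (phm k)"
    and "prob_space.indep_vars M (\<lambda>_. borel) (rv_family hp hm zp zm php phm) (rv_index_set K)"
  shows
    "let ap = (\<lambda>k \<omega>. complex_of_real (sqrt (\<eta> * max (u k) 0) / \<mu> k) * cis (php k \<omega>));
         am = (\<lambda>k \<omega>. complex_of_real (sqrt (\<eta> * max (- u k) 0) / \<mu> k) * cis (phm k \<omega>));
         yp = (\<lambda>\<omega>. (\<Sum>k=1..K. hp k \<omega> * ap k \<omega>) + zp \<omega>);
         ym = (\<lambda>\<omega>. (\<Sum>k=1..K. hm k \<omega> * am k \<omega>) + zm \<omega>);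
         shat = (\<lambda>\<omega>. ((cmod (yp \<omega>))\<^sup>2 - (cmod (ym \<omega>))\<^sup>2) / \<eta>);
         Sp = (\<Sum>k=1..K. max (u k) 0);
         Sm = (\<Sum>k=1..K. max (- u k) 0);
         s = (\<Sum>k=1..K. u k)
     in integrable M shat \<and> integrable M (\<lambda>\<omega>. (shat \<omega>)\<^sup>2) \<and>
        prob_space.expectation M shat = s \<and>
        prob_space.variance M shat =
          Sp\<^sup>2 + Sm\<^sup>2 + 2 * \<sigma>z2 / \<eta> * (\<Sum>k=1..K. \<bar>u k\<bar>) + 2 * \<sigma>z2\<^sup>2 / \<eta>\<^sup>2"
proof -
  interpret prob_space M by fact
  let ?X = "rv_family hp hm zp zm php phm"
  define dp where "dp k = sqrt (\<eta> * max (u k) 0) / \<mu> k" for k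
  define dm where "dm k = sqrt (\<eta> * max (- u k) 0) / \<mu> k" for k
  define Sp where "Sp = (\<Sum>k=1..K. max (u k) 0)"
  define Sm where "Sm = (\<Sum>k=1..K. max (- u k) 0)"
  have indices: "branch_indices K HP PP ZP \<inter> branch_indices K HM PM ZM = {}"
    "branch_indices K HP PP ZP \<subseteq> rv_index_set K" "branch_indices K HM PM ZM \<subseteq> rv_index_set K"
    by (auto simp: branch_indices_def rv_index_set_def)
  have \<mu>_sq: "(\<mu> k)\<^sup>2 > 0" if "k \<in> {1..K}" for k
    using assms(5)[OF that] by simp
  have "circular_moments (\<sigma>z2 + (\<Sum>k=1..K. (dp k)\<^sup>2 * (\<mu> k)\<^sup>2))
      (\<lambda>\<omega>. branch_signal K dp HP PP ZP (\<lambda>i. ?X i \<omega>))"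
    by (rule circular_moments_branch_signal[OF indep_vars_subset[OF assms(12) indices(2)]])
      (use assms(4,6,8) \<mu>_sq in \<open>auto simp: inj_def\<close>)
  moreover have "circular_moments (\<sigma>z2 + (\<Sum>k=1..K. (dm k)\<^sup>2 * (\<mu> k)\<^sup>2))
      (\<lambda>\<omega>. branch_signal K dm HM PM ZM (\<lambda>i. ?X i \<omega>))"
    by (rule circular_moments_branch_signal[OF indep_vars_subset[OF assms(12) indices(3)]])
      (use assms(4,7,9) \<mu>_sq in \<open>auto simp: inj_def\<close>)
  moreover have "(\<Sum>k=1..K. (dp k)\<^sup>2 * (\<mu> k)\<^sup>2) = \<eta> * Sp"
    and "(\<Sum>k=1..K. (dm k)\<^sup>2 * (\<mu> k)\<^sup>2) = \<eta> * Sm"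
    unfolding dp_def dm_def Sp_def Sm_def using assms(3,5)
    by (auto intro!: sum_power2_sqrt_divide_mult_power2 simp: less_imp_neq[THEN not_sym])
  ultimately have Yp: "circular_moments (\<sigma>z2 + \<eta> * Sp) (\<lambda>\<omega>. branch_signal K dp HP PP ZP (\<lambda>i. ?X i \<omega>))"
    and Ym: "circular_moments (\<sigma>z2 + \<eta> * Sm) (\<lambda>\<omega>. branch_signal K dm HM PM ZM (\<lambda>i. ?X i \<omega>))"
    by simp_all
  have Sp_minus_Sm: "Sp - Sm = (\<Sum>k=1..K. u k)"
    and Sp_plus_Sm: "Sp + Sm = (\<Sum>k=1..K. \<bar>u k\<bar>)"
    unfolding Sp_def Sm_def by (rule sum_pos_part_diff_neg_part sum_pos_part_add_neg_part)+
  have mean: "(\<sigma>z2 + \<eta> * Sp - (\<sigma>z2 + \<eta> * Sm)) / \<eta> = (\<Sum>k=1..K. u k)"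
    and var: "((\<sigma>z2 + \<eta> * Sp)\<^sup>2 + (\<sigma>z2 + \<eta> * Sm)\<^sup>2) / \<eta>\<^sup>2
      = Sp\<^sup>2 + Sm\<^sup>2 + 2 * \<sigma>z2 / \<eta> * (\<Sum>k=1..K. \<bar>u k\<bar>) + 2 * \<sigma>z2\<^sup>2 / \<eta>\<^sup>2"
    unfolding Sp_minus_Sm[symmetric] Sp_plus_Sm[symmetric] using assms(3)
    by (simp_all add: field_simps power2_eq_square)
  note moments = circular_moments_norm_square_diff[OF Yp Ym indep_var_branch_signal[OF assms(12) indices],
      where c=\<eta>, unfolded mean var branch_signal_def rv_family.simps Re_complex_of_real dp_def dm_def]
  show ?thesis
    unfolding Let_def Sp_def[symmetric] Sm_def[symmetric] using moments by (intro conjI)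
qed

end
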